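(* Let $S^0$ be an inverse semigroup with semilattice of idempotents $E^0$ and let $I$ be a left regular band having $E^0$ as a semilattice transversal. Suppose there is a left action $(x,e)\mapsto x\ast e$ of $S^0$ on $I$ (so $(xy)\ast e=x\ast(y\ast e)$) with $x\ast(ef)=(x\ast e)(x\ast f)$ for all $x\in S^0$, $e,f\in I$, satisfying: 1. for all $x,y\in S^0$, $x\ast(yy^{-1})=(xy)(xy)^{-1}$; 2. for all $x\in S^0$, $e\in I$, $(xx^{-1})\ast e=(xx^{-1})e$. Define on $W=\{(e,x)\in I\times S^0: e\in L_{xx^{-1}}\}$ the multiplication $(e,x)(g,y)=(e(x\ast g),xy)$. Then $W$ is a left inverse semigroup with an inverse transversal isomorphic to $S^0$, and $I(W)\cong I$. Moreover every left inverse semigroup with an inverse transversal can be constructed (up to isomorphism) in this way.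
   Context: $V(x)$ denotes the set of inverses of $x$. A left inverse semigroup is a regular semigroup in which each $\mathcal{R}$-class contains a unique idempotent (equivalently its idempotents form a left regular band). An inverse subsemigroup $T^0$ of a regular semigroup $T$ is an inverse transversal if $|V(x)\cap T^0|=1$ for all $x\in T$; writing $x^0$ for this element, $I(T)=\{xx^0:x\in T\}$. A left regular band satisfies $xyx=xy$; $E^0$ is a semilattice transversal of $I$ if it is a subsemilattice of $I$ and each element of $I$ has exactly one inverse in $E^0$. For $x\in E^0$, $L_x$ is the $\mathcal{L}$-class of $x$ in $I$. *)

theory Defs
  imports Main
begin

definition semigroup_on :: "'a set \<Rightarrow> ('a \<Rightarrow> 'a \<Rightarrow> 'a) \<Rightarrow> bool" where
  "semigroup_on S m \<longleftrightarrow> (\<forall>x\<in>S. \<forall>y\<in>S. m x y \<in> S) \<and>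
     (\<forall>x\<in>S. \<forall>y\<in>S. \<forall>z\<in>S. m (m x y) z = m x (m y z))"

definition inverses :: "'a set \<Rightarrow> ('a \<Rightarrow> 'a \<Rightarrow> 'a) \<Rightarrow> 'a \<Rightarrow> 'a set" where
  "inverses S m x = {y \<in> S. m (m x y) x = x \<and> m (m y x) y = y}"

definition regular_sg :: "'a set \<Rightarrow> ('a \<Rightarrow> 'a \<Rightarrow> 'a) \<Rightarrow> bool" where
  "regular_sg S m \<longleftrightarrow> semigroup_on S m \<and> (\<forall>x\<in>S. inverses S m x \<noteq> {})"

definition idems :: "'a set \<Rightarrow> ('a \<Rightarrow> 'a \<Rightarrow> 'a) \<Rightarrow> 'a set" where
  "idems S m = {e \<in> S. m e e = e}"

definition inverse_sg :: "'a set \<Rightarrow> ('a \<Rightarrow> 'a \<Rightarrow> 'a) \<Rightarrow> bool" where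
  "inverse_sg S m \<longleftrightarrow> semigroup_on S m \<and> (\<forall>x\<in>S. \<exists>!y. y \<in> inverses S m x)"

definition sg_inv :: "'a set \<Rightarrow> ('a \<Rightarrow> 'a \<Rightarrow> 'a) \<Rightarrow> 'a \<Rightarrow> 'a" where
  "sg_inv S m x = (THE y. y \<in> inverses S m x)"

text \<open>Green's relations: x R y iff xS^1 = yS^1; x L y iff S^1x = S^1y.\<close>
definition R_rel :: "'a set \<Rightarrow> ('a \<Rightarrow> 'a \<Rightarrow> 'a) \<Rightarrow> 'a \<Rightarrow> 'a \<Rightarrow> bool" where
  "R_rel S m x y \<longleftrightarrow> x \<in> S \<and> y \<in> S \<and>
     (x = y \<or> (\<exists>s\<in>S. x = m y s)) \<and> (y = x \<or> (\<exists>s\<in>S. y = m x s))"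

definition L_rel :: "'a set \<Rightarrow> ('a \<Rightarrow> 'a \<Rightarrow> 'a) \<Rightarrow> 'a \<Rightarrow> 'a \<Rightarrow> bool" where
  "L_rel S m x y \<longleftrightarrow> x \<in> S \<and> y \<in> S \<and>
     (x = y \<or> (\<exists>s\<in>S. x = m s y)) \<and> (y = x \<or> (\<exists>s\<in>S. y = m s x))"

definition L_class :: "'a set \<Rightarrow> ('a \<Rightarrow> 'a \<Rightarrow> 'a) \<Rightarrow> 'a \<Rightarrow> 'a set" where
  "L_class S m x = {y. L_rel S m y x}"

definition left_inverse_sg :: "'a set \<Rightarrow> ('a \<Rightarrow> 'a \<Rightarrow> 'a) \<Rightarrow> bool" where
  "left_inverse_sg S m \<longleftrightarrow> regular_sg S m \<and>
     (\<forall>x\<in>S. \<exists>!e. e \<in> idems S m \<and> R_rel S m x e)"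

definition inverse_subsg :: "'a set \<Rightarrow> 'a set \<Rightarrow> ('a \<Rightarrow> 'a \<Rightarrow> 'a) \<Rightarrow> bool" where
  "inverse_subsg T0 T m \<longleftrightarrow> T0 \<subseteq> T \<and> inverse_sg T0 m"

definition inverse_transversal :: "'a set \<Rightarrow> ('a \<Rightarrow> 'a \<Rightarrow> 'a) \<Rightarrow> 'a set \<Rightarrow> bool" where
  "inverse_transversal T m T0 \<longleftrightarrow> regular_sg T m \<and> inverse_subsg T0 T m \<and>
     (\<forall>x\<in>T. \<exists>!y. y \<in> inverses T m x \<inter> T0)"

definition trans_inv :: "'a set \<Rightarrow> ('a \<Rightarrow> 'a \<Rightarrow> 'a) \<Rightarrow> 'a set \<Rightarrow> 'a \<Rightarrow> 'a" where
  "trans_inv T m T0 x = (THE y. y \<in> inverses T m x \<inter> T0)"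

definition I_set :: "'a set \<Rightarrow> ('a \<Rightarrow> 'a \<Rightarrow> 'a) \<Rightarrow> 'a set \<Rightarrow> 'a set" where
  "I_set T m T0 = {m x (trans_inv T m T0 x) | x. x \<in> T}"

definition left_regular_band :: "'a set \<Rightarrow> ('a \<Rightarrow> 'a \<Rightarrow> 'a) \<Rightarrow> bool" where
  "left_regular_band I m \<longleftrightarrow> semigroup_on I m \<and> (\<forall>x\<in>I. m x x = x) \<and>
     (\<forall>x\<in>I. \<forall>y\<in>I. m (m x y) x = m x y)"

definition semilattice_transversal :: "'a set \<Rightarrow> 'a set \<Rightarrow> ('a \<Rightarrow> 'a \<Rightarrow> 'a) \<Rightarrow> bool" where
  "semilattice_transversal E I m \<longleftrightarrow> E \<subseteq> I \<and> (\<forall>e\<in>E. \<forall>f\<in>E. m e f \<in> E) \<and>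
     (\<forall>e\<in>E. m e e = e) \<and> (\<forall>e\<in>E. \<forall>f\<in>E. m e f = m f e) \<and>
     (\<forall>x\<in>I. \<exists>!y. y \<in> inverses I m x \<inter> E)"

definition sg_iso :: "('a \<Rightarrow> 'b) \<Rightarrow> 'a set \<Rightarrow> ('a \<Rightarrow> 'a \<Rightarrow> 'a) \<Rightarrow> 'b set \<Rightarrow> ('b \<Rightarrow> 'b \<Rightarrow> 'b) \<Rightarrow> bool" where
  "sg_iso f A mA B mB \<longleftrightarrow> bij_betw f A B \<and> (\<forall>x\<in>A. \<forall>y\<in>A. f (mA x y) = mB (f x) (f y))"

definition isomorphic :: "'a set \<Rightarrow> ('a \<Rightarrow> 'a \<Rightarrow> 'a) \<Rightarrow> 'b set \<Rightarrow> ('b \<Rightarrow> 'b \<Rightarrow> 'b) \<Rightarrow> bool" where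
  "isomorphic A mA B mB \<longleftrightarrow> (\<exists>f. sg_iso f A mA B mB)"

text \<open>Hypotheses of the construction: S0 inverse semigroup with semilattice of idempotents E0,
  I a left regular band with E0 as semilattice transversal (E0 a subsemilattice of I, so the two
  multiplications agree on E0), a left action act (x * e) of S0 on I by endomorphisms,
  satisfying conditions 1 and 2.\<close>
definition construction_data ::
  "'a set \<Rightarrow> ('a \<Rightarrow> 'a \<Rightarrow> 'a) \<Rightarrow> 'a set \<Rightarrow> ('a \<Rightarrow> 'a \<Rightarrow> 'a) \<Rightarrow> ('a \<Rightarrow> 'a \<Rightarrow> 'a) \<Rightarrow> bool" where
  "construction_data S0 mS I mI act \<longleftrightarrow>
     inverse_sg S0 mS \<and> left_regular_band I mI \<and>
     semilattice_transversal (idems S0 mS) I mI \<and>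
     (\<forall>e\<in>idems S0 mS. \<forall>f\<in>idems S0 mS. mI e f = mS e f) \<and>
     (\<forall>x\<in>S0. \<forall>e\<in>I. act x e \<in> I) \<and>
     (\<forall>x\<in>S0. \<forall>y\<in>S0. \<forall>e\<in>I. act (mS x y) e = act x (act y e)) \<and>
     (\<forall>x\<in>S0. \<forall>e\<in>I. \<forall>f\<in>I. act x (mI e f) = mI (act x e) (act x f)) \<and>
     (\<forall>x\<in>S0. \<forall>y\<in>S0. act x (mS y (sg_inv S0 mS y)) = mS (mS x y) (sg_inv S0 mS (mS x y))) \<and>
     (\<forall>x\<in>S0. \<forall>e\<in>I. act (mS x (sg_inv S0 mS x)) e = mI (mS x (sg_inv S0 mS x)) e)"

definition W_set :: "'a set \<Rightarrow> ('a \<Rightarrow> 'a \<Rightarrow> 'a) \<Rightarrow> 'a set \<Rightarrow> ('a \<Rightarrow> 'a \<Rightarrow> 'a) \<Rightarrow> ('a \<times> 'a) set" where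
  "W_set S0 mS I mI = {(e, x). x \<in> S0 \<and> e \<in> I \<and> e \<in> L_class I mI (mS x (sg_inv S0 mS x))}"

definition W_mult :: "('a \<Rightarrow> 'a \<Rightarrow> 'a) \<Rightarrow> ('a \<Rightarrow> 'a \<Rightarrow> 'a) \<Rightarrow> ('a \<Rightarrow> 'a \<Rightarrow> 'a) \<Rightarrow>
    'a \<times> 'a \<Rightarrow> 'a \<times> 'a \<Rightarrow> 'a \<times> 'a" where
  "W_mult mS mI act p q = (mI (fst p) (act (snd p) (fst q)), mS (snd p) (snd q))"

end

theory Submission
  imports Defs
begin

(* W is a semigroup because S0 acts on I by endomorphisms, and (e, x) has the inverse
   (x\<inverse>x, x\<inverse>).  An idempotent (g, f) has f \<in> E0, and (e, x x\<inverse>) is the only idempotent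
   R-related to (e, x); these idempotents form a copy of I, while the pairs (x x\<inverse>, x) form an
   inverse transversal isomorphic to S0.
   Conversely, for a left inverse semigroup T with inverse transversal T0, the idempotents E of T
   form a left regular band (each R-class has one idempotent) having the idempotents of T0 as a
   semilattice transversal, and T0 acts on E by conjugation x * e = x e x\<inverse>.  The map
   (e, x) \<mapsto> e x is then an isomorphism W \<rightarrow> T with inverse t \<mapsto> (t t\<^sup>0, (t\<^sup>0)\<inverse>). *)

locale inverse_semigroup =
  fixes S :: "'a set" and m :: "'a \<Rightarrow> 'a \<Rightarrow> 'a" (infixl "\<cdot>" 70)
  assumes inverse_sg: "inverse_sg S m"
begin

lemma closed [simp]: "x \<in> S \<Longrightarrow> y \<in> S \<Longrightarrow> x \<cdot> y \<in> S"
  using inverse_sg by (auto simp: inverse_sg_def semigroup_on_def)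

lemma assoc [simp]: "x \<in> S \<Longrightarrow> y \<in> S \<Longrightarrow> z \<in> S \<Longrightarrow> (x \<cdot> y) \<cdot> z = x \<cdot> (y \<cdot> z)"
  using inverse_sg by (auto simp: inverse_sg_def semigroup_on_def)

abbreviation sinv :: "'a \<Rightarrow> 'a" where "sinv x \<equiv> sg_inv S m x"

lemma sinv_inverses: "x \<in> S \<Longrightarrow> sinv x \<in> inverses S m x"
  using inverse_sg unfolding inverse_sg_def sg_inv_def by (metis theI')

lemma sinv_closed [simp]: "x \<in> S \<Longrightarrow> sinv x \<in> S"
  using sinv_inverses[of x] by (simp add: inverses_def)

lemma mult_sinv_mult [simp]: "x \<in> S \<Longrightarrow> x \<cdot> (sinv x \<cdot> x) = x"
  using sinv_inverses[of x] by (simp add: inverses_def)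

lemma sinv_mult_sinv [simp]: "x \<in> S \<Longrightarrow> sinv x \<cdot> (x \<cdot> sinv x) = sinv x"
  using sinv_inverses[of x] by (simp add: inverses_def)

lemma mult_sinv_mult_left [simp]:
  assumes "x \<in> S" "z \<in> S" shows "x \<cdot> (sinv x \<cdot> (x \<cdot> z)) = x \<cdot> z"
proof -
  have "x \<cdot> (sinv x \<cdot> (x \<cdot> z)) = (x \<cdot> (sinv x \<cdot> x)) \<cdot> z" using assms by (simp del: mult_sinv_mult)
  then show ?thesis using assms by simp
qed

lemma sinv_mult_sinv_left [simp]:
  assumes "x \<in> S" "z \<in> S" shows "sinv x \<cdot> (x \<cdot> (sinv x \<cdot> z)) = sinv x \<cdot> z"
proof -
  have "sinv x \<cdot> (x \<cdot> (sinv x \<cdot> z)) = (sinv x \<cdot> (x \<cdot> sinv x)) \<cdot> z"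
    using assms by (simp del: sinv_mult_sinv)
  then show ?thesis using assms by simp
qed

lemma idem_mult_left [simp]: "e \<in> S \<Longrightarrow> e \<cdot> e = e \<Longrightarrow> z \<in> S \<Longrightarrow> e \<cdot> (e \<cdot> z) = e \<cdot> z"
  by (metis assoc)

lemma range_idem_idem: "x \<in> S \<Longrightarrow> (x \<cdot> sinv x) \<cdot> (x \<cdot> sinv x) = x \<cdot> sinv x"
  by simp

lemma sinv_unique:
  assumes "x \<in> S" "y \<in> S" "x \<cdot> (y \<cdot> x) = x" "y \<cdot> (x \<cdot> y) = y"
  shows "y = sinv x"
proof -
  have "y \<in> inverses S m x" using assms by (simp add: inverses_def)
  moreover have "\<exists>!y. y \<in> inverses S m x" using inverse_sg assms(1) by (simp add: inverse_sg_def)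
  ultimately show ?thesis using sinv_inverses[OF assms(1)] by blast
qed

lemma sinv_sinv [simp]: "x \<in> S \<Longrightarrow> sinv (sinv x) = x"
  using sinv_unique[of "sinv x" x] by simp

lemma sinv_idem: "e \<in> S \<Longrightarrow> e \<cdot> e = e \<Longrightarrow> sinv e = e"
  using sinv_unique[of e e] by simp

lemma mult_idems_idem:
  assumes a: "a \<in> S" "a \<cdot> a = a" and b: "b \<in> S" "b \<cdot> b = b"
  shows "(a \<cdot> b) \<cdot> (a \<cdot> b) = a \<cdot> b"
proof -
  define x where "x = sinv (a \<cdot> b)"
  have x: "x \<in> S" using a b by (simp add: x_def)
  have abx: "a \<cdot> (b \<cdot> (x \<cdot> (a \<cdot> b))) = a \<cdot> b"
    using mult_sinv_mult[of "a \<cdot> b"] a b x by (simp add: x_def[symmetric] del: mult_sinv_mult)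
  have xab: "x \<cdot> (a \<cdot> (b \<cdot> x)) = x"
    using sinv_mult_sinv[of "a \<cdot> b"] a b x by (simp add: x_def[symmetric] del: sinv_mult_sinv)
  define g where "g = b \<cdot> (x \<cdot> a)"
  have g: "g \<in> S" using a b x by (simp add: g_def)
  have xabz: "x \<cdot> (a \<cdot> (b \<cdot> (x \<cdot> z))) = x \<cdot> z" if "z \<in> S" for z
  proof -
    have "(x \<cdot> (a \<cdot> (b \<cdot> x))) \<cdot> z = x \<cdot> z" by (simp only: xab)
    then show ?thesis using a b x that by simp
  qed
  have g_idem: "g \<cdot> g = g"
    using xabz a b x by (simp add: g_def)
  \<comment> \<open>\<open>b x a\<close> is an inverse of \<open>a b\<close>, so it equals \<open>x\<close>, which is therefore idempotent and self-inverse.\<close>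
  have "(a \<cdot> b) \<cdot> (g \<cdot> (a \<cdot> b)) = a \<cdot> b"
    using abx a b x by (simp add: g_def)
  moreover have "g \<cdot> ((a \<cdot> b) \<cdot> g) = g"
    using xabz a b x by (simp add: g_def)
  ultimately have "g = x" using sinv_unique[of "a \<cdot> b" g] a b g by (simp add: x_def)
  with g_idem x have "sinv x = x" by (simp add: sinv_idem)
  then show ?thesis using g_idem \<open>g = x\<close> a b by (simp add: x_def)
qed

lemma idems_commute:
  assumes e: "e \<in> S" "e \<cdot> e = e" and f: "f \<in> S" "f \<cdot> f = f"
  shows "e \<cdot> f = f \<cdot> e"
proof -
  have ef: "(e \<cdot> f) \<cdot> (e \<cdot> f) = e \<cdot> f" and fe: "(f \<cdot> e) \<cdot> (f \<cdot> e) = f \<cdot> e"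
    using mult_idems_idem e f by blast+
  have "(e \<cdot> f) \<cdot> ((f \<cdot> e) \<cdot> (e \<cdot> f)) = e \<cdot> f"
    using ef e f by simp
  moreover have "(f \<cdot> e) \<cdot> ((e \<cdot> f) \<cdot> (f \<cdot> e)) = f \<cdot> e"
    using fe e f by simp
  ultimately have "f \<cdot> e = sinv (e \<cdot> f)" using sinv_unique e f by simp
  moreover have "e \<cdot> f = sinv (e \<cdot> f)" using sinv_idem ef e f by simp
  ultimately show ?thesis by simp
qed

lemma idems_commute_left:
  assumes "e \<in> S" "e \<cdot> e = e" "f \<in> S" "f \<cdot> f = f" "z \<in> S"
  shows "e \<cdot> (f \<cdot> z) = f \<cdot> (e \<cdot> z)"
  using idems_commute[of e f] assms by (metis assoc)

lemma sinv_mult: assumes x: "x \<in> S" and y: "y \<in> S" shows "sinv (x \<cdot> y) = sinv y \<cdot> sinv x"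
proof -
  have commute: "y \<cdot> (sinv y \<cdot> (sinv x \<cdot> (x \<cdot> z))) = sinv x \<cdot> (x \<cdot> (y \<cdot> (sinv y \<cdot> z)))" if "z \<in> S" for z
    using idems_commute_left[of "y \<cdot> sinv y" "sinv x \<cdot> x" z] x y that by simp
  have "(x \<cdot> y) \<cdot> ((sinv y \<cdot> sinv x) \<cdot> (x \<cdot> y)) = x \<cdot> y"
    using x y commute[of y] by simp
  moreover have "(sinv y \<cdot> sinv x) \<cdot> ((x \<cdot> y) \<cdot> (sinv y \<cdot> sinv x)) = sinv y \<cdot> sinv x"
    using x y commute[of "sinv x", symmetric] by simp
  ultimately show ?thesis by (intro sinv_unique[symmetric]) (use x y in simp_all)
qed

end

lemma L_rel_idems_iff:
  assumes "semigroup_on A m" "e \<in> A" "f \<in> A" "m e e = e" "m f f = f"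
  shows "L_rel A m e f \<longleftrightarrow> m e f = e \<and> m f e = f"
proof
  have assoc: "m (m x y) z = m x (m y z)" if "x \<in> A" "y \<in> A" "z \<in> A" for x y z
    using assms(1) that by (simp add: semigroup_on_def)
  assume L: "L_rel A m e f"
  from L have "e = f \<or> (\<exists>s\<in>A. e = m s f)" by (simp add: L_rel_def)
  then have "m e f = e" using assoc assms by auto
  moreover from L have "f = e \<or> (\<exists>s\<in>A. f = m s e)" by (simp add: L_rel_def)
  then have "m f e = f" using assoc assms by auto
  ultimately show "m e f = e \<and> m f e = f" by simp
next
  assume "m e f = e \<and> m f e = f"
  then have "\<exists>s\<in>A. e = m s f" "\<exists>s\<in>A. f = m s e" using assms by metis+
  then show "L_rel A m e f" using assms by (auto simp: L_rel_def)
qed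

lemma R_rel_idem_left_unit:
  assumes "semigroup_on A m" "p \<in> A" "m p p = p" "R_rel A m x p" "R_rel A m x q"
  shows "m p q = q"
proof -
  have assoc: "m (m x y) z = m x (m y z)" if "x \<in> A" "y \<in> A" "z \<in> A" for x y z
    using assms(1) that by (simp add: semigroup_on_def)
  have x: "x \<in> A" using assms(4) by (simp add: R_rel_def)
  from assms(4) have "x = p \<or> (\<exists>s\<in>A. x = m p s)" by (simp add: R_rel_def)
  then have px: "m p x = x" using assoc[of p p] assms by auto
  from assms(5) have "q = x \<or> (\<exists>s\<in>A. q = m x s)" by (simp add: R_rel_def)
  then show ?thesis using assoc[of p x] px x assms(2) by auto
qed

locale construction =
  fixes S0 :: "'a set" and mS :: "'a \<Rightarrow> 'a \<Rightarrow> 'a" (infixl "\<cdot>" 70)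
    and I :: "'a set" and mI :: "'a \<Rightarrow> 'a \<Rightarrow> 'a" (infixl "\<odot>" 70)
    and act :: "'a \<Rightarrow> 'a \<Rightarrow> 'a"
  assumes construction_data: "construction_data S0 mS I mI act"
begin

sublocale inverse_semigroup S0 mS
  using construction_data by unfold_locales (simp add: construction_data_def)

lemma left_regular_band: "left_regular_band I mI"
  using construction_data by (simp add: construction_data_def)

lemma semigroup_I: "semigroup_on I mI"
  using left_regular_band by (simp add: left_regular_band_def)

lemma I_closed [simp]: "e \<in> I \<Longrightarrow> f \<in> I \<Longrightarrow> e \<odot> f \<in> I"
  using semigroup_I by (simp add: semigroup_on_def)

lemma I_assoc [simp]: "e \<in> I \<Longrightarrow> f \<in> I \<Longrightarrow> g \<in> I \<Longrightarrow> (e \<odot> f) \<odot> g = e \<odot> (f \<odot> g)"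
  using semigroup_I by (simp add: semigroup_on_def)

lemma I_idem [simp]: "e \<in> I \<Longrightarrow> e \<odot> e = e"
  using left_regular_band by (simp add: left_regular_band_def)

lemma I_left_regular: "e \<in> I \<Longrightarrow> f \<in> I \<Longrightarrow> e \<odot> (f \<odot> e) = e \<odot> f"
  using left_regular_band by (simp add: left_regular_band_def)

lemma semilattice_transversal: "semilattice_transversal (idems S0 mS) I mI"
  using construction_data by (simp add: construction_data_def)

lemma idem_in_I: "f \<in> S0 \<Longrightarrow> f \<cdot> f = f \<Longrightarrow> f \<in> I"
  using semilattice_transversal by (auto simp: semilattice_transversal_def idems_def)

lemma mult_idems_agree:
  "e \<in> S0 \<Longrightarrow> e \<cdot> e = e \<Longrightarrow> f \<in> S0 \<Longrightarrow> f \<cdot> f = f \<Longrightarrow> e \<odot> f = e \<cdot> f"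
  using construction_data by (simp add: construction_data_def idems_def)

lemma act_closed [simp]: "x \<in> S0 \<Longrightarrow> e \<in> I \<Longrightarrow> act x e \<in> I"
  using construction_data unfolding construction_data_def by blast

lemma act_mult: "x \<in> S0 \<Longrightarrow> y \<in> S0 \<Longrightarrow> e \<in> I \<Longrightarrow> act (x \<cdot> y) e = act x (act y e)"
  using construction_data unfolding construction_data_def by blast

lemma act_hom: "x \<in> S0 \<Longrightarrow> e \<in> I \<Longrightarrow> f \<in> I \<Longrightarrow> act x (e \<odot> f) = act x e \<odot> act x f"
  using construction_data unfolding construction_data_def by blast

lemma act_range_idem: "x \<in> S0 \<Longrightarrow> y \<in> S0 \<Longrightarrow> act x (y \<cdot> sinv y) = (x \<cdot> y) \<cdot> sinv (x \<cdot> y)"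
  using construction_data unfolding construction_data_def by blast

lemma act_range_idem_left: "x \<in> S0 \<Longrightarrow> e \<in> I \<Longrightarrow> act (x \<cdot> sinv x) e = (x \<cdot> sinv x) \<odot> e"
  using construction_data unfolding construction_data_def by blast

lemma act_idem: "f \<in> S0 \<Longrightarrow> f \<cdot> f = f \<Longrightarrow> g \<in> I \<Longrightarrow> act f g = f \<odot> g"
  using act_range_idem_left[of f g] sinv_idem[of f] by simp

lemma range_idem_in_I [simp]: "x \<in> S0 \<Longrightarrow> x \<cdot> sinv x \<in> I"
  using idem_in_I[of "x \<cdot> sinv x"] by simp

lemma domain_idem_in_I [simp]: "x \<in> S0 \<Longrightarrow> sinv x \<cdot> x \<in> I"
  using idem_in_I[of "sinv x \<cdot> x"] by simp

abbreviation W where "W \<equiv> W_set S0 mS I mI"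
abbreviation mW where "mW \<equiv> W_mult mS mI act"

lemma mW_Pair [simp]: "mW (e, x) (g, y) = (e \<odot> act x g, x \<cdot> y)"
  by (simp add: W_mult_def)

lemma mem_W_iff:
  "(e, x) \<in> W \<longleftrightarrow> x \<in> S0 \<and> e \<in> I \<and> e \<odot> (x \<cdot> sinv x) = e \<and> (x \<cdot> sinv x) \<odot> e = x \<cdot> sinv x"
proof -
  have "x \<in> S0 \<Longrightarrow> e \<in> I \<Longrightarrow>
      L_rel I mI e (x \<cdot> sinv x) \<longleftrightarrow> e \<odot> (x \<cdot> sinv x) = e \<and> (x \<cdot> sinv x) \<odot> e = x \<cdot> sinv x"
    using L_rel_idems_iff[OF semigroup_I, of e "x \<cdot> sinv x"] by simp
  then show ?thesis by (auto simp: W_set_def L_class_def)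
qed

lemma W_mult_closed:
  assumes ex: "(e, x) \<in> W" and gy: "(g, y) \<in> W"
  shows "(e \<odot> act x g, x \<cdot> y) \<in> W"
proof -
  define p where "p = x \<cdot> sinv x"
  define q where "q = y \<cdot> sinv y"
  define r where "r = (x \<cdot> y) \<cdot> sinv (x \<cdot> y)"
  have x: "x \<in> S0" and e: "e \<in> I" and ep: "e \<odot> p = e" and pe: "p \<odot> e = p"
    using ex by (simp_all add: mem_W_iff p_def)
  have y: "y \<in> S0" and g: "g \<in> I" and gq: "g \<odot> q = g" and qg: "q \<odot> g = q"
    using gy by (simp_all add: mem_W_iff q_def)
  have pqr: "p \<in> I" "q \<in> I" "r \<in> I"
    using x y range_idem_in_I[of "x \<cdot> y"] by (simp_all add: p_def q_def r_def del: assoc)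
  have act_q: "act x q = r" using act_range_idem[OF x y] by (simp add: q_def r_def)
  have xg_r: "act x g \<odot> r = act x g" and r_xg: "r \<odot> act x g = r"
    using act_hom[OF x g pqr(2)] act_hom[OF x pqr(2) g] gq qg act_q by simp_all
  have r_idem: "r \<cdot> r = r" and p_idem: "p \<cdot> p = p"
    unfolding r_def p_def by (rule range_idem_idem, simp add: x y)+
  have "r \<cdot> p = r"
    using x y by (simp add: r_def p_def sinv_mult)
  then have rp: "r \<odot> p = r"
    using mult_idems_agree[OF _ r_idem _ p_idem] x y by (simp add: r_def p_def del: assoc)
  have re: "r \<odot> e = r"
    using I_assoc[of r p e] rp pe pqr e by simp
  have "(e \<odot> act x g) \<odot> r = e \<odot> act x g" using xg_r e x g pqr by simp
  moreover have "r \<odot> (e \<odot> act x g) = r"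
    using I_assoc[of r e "act x g"] re r_xg e x g pqr by simp
  ultimately show ?thesis using x y e g by (simp add: mem_W_iff r_def)
qed

lemma W_semigroup: "semigroup_on W mW"
proof -
  have "mW (mW a b) c = mW a (mW b c)" if "a \<in> W" "b \<in> W" "c \<in> W" for a b c
  proof -
    obtain e x g y h z where abc: "a = (e, x)" "b = (g, y)" "c = (h, z)"
      by (cases a, cases b, cases c) auto
    have "x \<in> S0" "e \<in> I" "y \<in> S0" "g \<in> I" "z \<in> S0" "h \<in> I"
      using that abc by (simp_all add: mem_W_iff)
    then show ?thesis using abc act_hom[of x g "act y h"] act_mult[of x y h] by simp
  qed
  moreover have "mW a b \<in> W" if "a \<in> W" "b \<in> W" for a b
    using W_mult_closed that by (cases a, cases b) auto
  ultimately show ?thesis by (simp add: semigroup_on_def)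
qed

lemma act_sinv_on_W: assumes "(e, x) \<in> W" shows "act (sinv x) e = sinv x \<cdot> x"
proof -
  have x: "x \<in> S0" "e \<in> I" "(x \<cdot> sinv x) \<odot> e = x \<cdot> sinv x" using assms by (simp_all add: mem_W_iff)
  have "act (sinv x) e = act (sinv x) (act (x \<cdot> sinv x) e)"
    using act_mult[of "sinv x" "x \<cdot> sinv x" e] x by simp
  also have "\<dots> = act (sinv x) (x \<cdot> sinv x)" using act_range_idem_left x by simp
  also have "\<dots> = sinv x \<cdot> x" using act_range_idem[of "sinv x" x] x by (simp add: sinv_idem)
  finally show ?thesis .
qed

lemma act_domain_idem: "x \<in> S0 \<Longrightarrow> act x (sinv x \<cdot> x) = x \<cdot> sinv x"
  using act_range_idem[of x "sinv x"] by (simp add: sinv_idem)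

lemma W_inverse_closed: "(e, x) \<in> W \<Longrightarrow> (sinv x \<cdot> x, sinv x) \<in> W"
  by (simp add: mem_W_iff)

lemma W_mult_inverse: "(e, x) \<in> W \<Longrightarrow> mW (e, x) (sinv x \<cdot> x, sinv x) = (e, x \<cdot> sinv x)"
  by (simp add: mem_W_iff act_domain_idem del: assoc)

lemma W_inverse_mult: "(e, x) \<in> W \<Longrightarrow> mW (sinv x \<cdot> x, sinv x) (e, x) = (sinv x \<cdot> x, sinv x \<cdot> x)"
  using act_sinv_on_W[of e x] by (simp add: mem_W_iff del: assoc)

lemma W_inverse: assumes ex: "(e, x) \<in> W" shows "(sinv x \<cdot> x, sinv x) \<in> inverses W mW (e, x)"
proof -
  have x: "x \<in> S0" "e \<in> I" "(x \<cdot> sinv x) \<odot> e = x \<cdot> sinv x" "e \<odot> (x \<cdot> sinv x) = e"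
    using ex by (simp_all add: mem_W_iff)
  have x_cancel: "(x \<cdot> sinv x) \<cdot> x = x" "(sinv x \<cdot> x) \<cdot> sinv x = sinv x" using x by simp_all
  have "mW (mW (e, x) (sinv x \<cdot> x, sinv x)) (e, x) = (e, x)"
    using W_mult_inverse[OF ex] act_range_idem_left[of x e] x x_cancel by (simp del: assoc)
  moreover have "mW (mW (sinv x \<cdot> x, sinv x) (e, x)) (sinv x \<cdot> x, sinv x) = (sinv x \<cdot> x, sinv x)"
    using W_inverse_mult[OF ex] act_range_idem_left[of "sinv x" "sinv x \<cdot> x"] x x_cancel
    by (simp del: assoc)
  ultimately show ?thesis using W_inverse_closed[OF ex] by (simp add: inverses_def)
qed

lemma W_regular: "regular_sg W mW"
proof -
  have "inverses W mW w \<noteq> {}" if "w \<in> W" for w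
    using W_inverse[of "fst w" "snd w"] that by (cases w) auto
  then show ?thesis using W_semigroup by (simp add: regular_sg_def)
qed

lemma W_idem_iff:
  assumes "(g, f) \<in> W"
  shows "mW (g, f) (g, f) = (g, f) \<longleftrightarrow> f \<cdot> f = f"
  using assms act_idem[of f g] sinv_idem[of f] by (auto simp: mem_W_iff)

lemma W_idems_mutual_left_units_eq:
  assumes gf: "(g, f) \<in> W" "f \<cdot> f = f" and gf': "(g', f') \<in> W" "f' \<cdot> f' = f'"
    and left: "mW (g, f) (g', f') = (g', f')" and right: "mW (g', f') (g, f) = (g, f)"
  shows "(g, f) = (g', f')"
proof -
  have f: "f \<in> S0" "g \<in> I" "g \<odot> f = g" "f \<in> I" and f': "f' \<in> S0" "g' \<in> I" "g' \<odot> f' = g'" "f' \<in> I"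
    using gf gf' sinv_idem idem_in_I by (auto simp: mem_W_iff)
  have "f \<cdot> f' = f'" "g \<odot> (f \<odot> g') = g'" "f' \<cdot> f = f" "g' \<odot> (f' \<odot> g) = g"
    using left right act_idem f f' gf(2) gf'(2) by simp_all
  then have "f = f'" and "g \<odot> g' = g'" and "g' \<odot> g = g"
    using idems_commute[of f f'] gf gf' f f' I_assoc[of g f g'] I_assoc[of g' f' g] by simp_all
  then have "g = g \<odot> g'" using I_left_regular[of g g'] f f' by (metis I_assoc)
  with \<open>f = f'\<close> \<open>g \<odot> g' = g'\<close> show ?thesis by simp
qed

lemma W_left_inverse: "left_inverse_sg W mW"
proof -
  have "\<exists>!q. q \<in> idems W mW \<and> R_rel W mW w q" if w: "w \<in> W" for w
  proof -
    obtain e x where w_ex: "w = (e, x)" by (cases w)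
    define p where "p = x \<cdot> sinv x"
    have x: "x \<in> S0" "e \<in> I" "p \<odot> e = p" "e \<odot> p = e"
      using w w_ex by (simp_all add: mem_W_iff p_def)
    have p: "p \<in> S0" "p \<cdot> p = p" "sinv p = p" using x(1) sinv_idem by (simp_all add: p_def)
    have ep_W: "(e, p) \<in> W" using x p by (simp add: mem_W_iff)
    have ep_idem: "(e, p) \<in> idems W mW" using ep_W p W_idem_iff[OF ep_W] by (simp add: idems_def del: mW_Pair)
    have "p \<cdot> x = x" using x(1) by (simp add: p_def)
    then have "w = mW (e, p) w" using act_idem[of p e] x p w_ex by simp
    moreover have "(e, p) = mW w (sinv x \<cdot> x, sinv x)" using W_mult_inverse w w_ex p_def by simp
    ultimately have R: "R_rel W mW w (e, p)"
      using w ep_W W_inverse_closed[of e x] w_ex unfolding R_rel_def by blast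
    show ?thesis
    proof (rule ex1I[of _ "(e, p)"])
      fix q assume q: "q \<in> idems W mW \<and> R_rel W mW w q"
      then have "q \<in> W" "mW q q = q" by (simp_all add: idems_def del: mW_Pair)
      have "mW q (e, p) = (e, p)"
        using R_rel_idem_left_unit[OF W_semigroup \<open>q \<in> W\<close> \<open>mW q q = q\<close>] q R by blast
      moreover have "mW (e, p) q = q"
        using R_rel_idem_left_unit[OF W_semigroup ep_W] ep_idem q R by (simp add: idems_def del: mW_Pair)
      moreover obtain g f where q_gf: "q = (g, f)" by (cases q)
      moreover have "(g, f) \<in> W" "f \<cdot> f = f"
        using \<open>q \<in> W\<close> \<open>mW q q = q\<close> W_idem_iff q_gf by (auto simp del: mW_Pair)
      ultimately show "q = (e, p)"
        using W_idems_mutual_left_units_eq[of g f e p] ep_W p(2) by (simp del: mW_Pair)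
    qed (use ep_idem R in simp)
  qed
  then show ?thesis using W_regular by (simp add: left_inverse_sg_def)
qed

definition W_transversal :: "('a \<times> 'a) set" where
  "W_transversal = (\<lambda>x. (x \<cdot> sinv x, x)) ` S0"

lemma W_transversal_subset: "W_transversal \<subseteq> W"
  by (auto simp: W_transversal_def mem_W_iff simp del: assoc)

lemma W_transversal_mult:
  assumes x: "x \<in> S0" and y: "y \<in> S0"
  shows "mW (x \<cdot> sinv x, x) (y \<cdot> sinv y, y) = ((x \<cdot> y) \<cdot> sinv (x \<cdot> y), x \<cdot> y)"
proof -
  have "(x \<cdot> sinv x) \<odot> ((x \<cdot> y) \<cdot> sinv (x \<cdot> y)) = (x \<cdot> sinv x) \<cdot> ((x \<cdot> y) \<cdot> sinv (x \<cdot> y))"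
    by (rule mult_idems_agree) (use x y range_idem_idem[of x] range_idem_idem[of "x \<cdot> y"] in \<open>simp_all del: assoc\<close>)
  also have "\<dots> = (x \<cdot> y) \<cdot> sinv (x \<cdot> y)" using x y by (simp add: sinv_mult)
  finally show ?thesis using act_range_idem[OF x y] by (simp del: assoc)
qed

lemma W_transversal_inverse_mem: "x \<in> S0 \<Longrightarrow> (sinv x \<cdot> x, sinv x) \<in> W_transversal"
  unfolding W_transversal_def by (rule image_eqI[of _ _ "sinv x"]) simp_all

lemma snd_inverses_eq_sinv:
  assumes "(g, y) \<in> inverses A mW (e, x)" "x \<in> S0" "y \<in> S0"
  shows "y = sinv x"
  using assms sinv_unique[of x y] by (simp add: inverses_def)

lemma W_transversal_inverse_sg: "inverse_sg W_transversal mW"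
proof -
  have "\<forall>a\<in>W_transversal. \<forall>b\<in>W_transversal. mW a b \<in> W_transversal"
    using W_transversal_mult by (auto simp: W_transversal_def simp del: assoc)
  then have "semigroup_on W_transversal mW"
    using W_semigroup W_transversal_subset unfolding semigroup_on_def by (meson subsetD)
  moreover have "\<exists>!b. b \<in> inverses W_transversal mW a" if a: "a \<in> W_transversal" for a
  proof -
    obtain x where x: "x \<in> S0" "a = (x \<cdot> sinv x, x)" using a by (auto simp: W_transversal_def)
    show ?thesis
    proof (rule ex1I[of _ "(sinv x \<cdot> x, sinv x)"])
      show "(sinv x \<cdot> x, sinv x) \<in> inverses W_transversal mW a"
        using W_inverse[of "x \<cdot> sinv x" x] W_transversal_subset a x W_transversal_inverse_mem
        by (auto simp: inverses_def)
    next
      fix c assume c: "c \<in> inverses W_transversal mW a"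
      then obtain y where y: "y \<in> S0" "c = (y \<cdot> sinv y, y)"
        by (auto simp: inverses_def W_transversal_def)
      then show "c = (sinv x \<cdot> x, sinv x)"
        using snd_inverses_eq_sinv[of "y \<cdot> sinv y" y W_transversal "x \<cdot> sinv x" x] c x by simp
    qed
  qed
  ultimately show ?thesis by (simp add: inverse_sg_def)
qed

lemma W_transversal_inverses:
  assumes ex: "(e, x) \<in> W"
  shows "inverses W mW (e, x) \<inter> W_transversal = {(sinv x \<cdot> x, sinv x)}"
proof -
  have x: "x \<in> S0" using ex by (simp add: mem_W_iff)
  have "c = (sinv x \<cdot> x, sinv x)" if c: "c \<in> inverses W mW (e, x) \<inter> W_transversal" for c
  proof -
    obtain y where y: "y \<in> S0" "c = (y \<cdot> sinv y, y)" using c by (auto simp: W_transversal_def)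
    then show ?thesis using snd_inverses_eq_sinv[of "y \<cdot> sinv y" y W e x] c x by simp
  qed
  then show ?thesis using W_inverse[OF ex] W_transversal_inverse_mem[OF x] by blast
qed

lemma W_inverse_transversal: "inverse_transversal W mW W_transversal"
proof -
  have "\<exists>!c. c \<in> inverses W mW w \<inter> W_transversal" if "w \<in> W" for w
    using W_transversal_inverses[of "fst w" "snd w"] that by (cases w) auto
  then show ?thesis using W_regular W_transversal_subset W_transversal_inverse_sg
    by (simp add: inverse_transversal_def inverse_subsg_def)
qed

lemma W_transversal_iso: "isomorphic W_transversal mW S0 mS"
proof -
  have "inj_on snd W_transversal" by (auto simp: W_transversal_def inj_on_def)
  moreover have "snd ` W_transversal = S0" by (force simp: W_transversal_def image_image)
  moreover have "\<forall>a\<in>W_transversal. \<forall>b\<in>W_transversal. snd (mW a b) = snd a \<cdot> snd b"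
    by (simp add: W_mult_def)
  ultimately show ?thesis unfolding isomorphic_def sg_iso_def bij_betw_def by blast
qed

lemma W_trans_inv: "(e, x) \<in> W \<Longrightarrow> trans_inv W mW W_transversal (e, x) = (sinv x \<cdot> x, sinv x)"
  using W_transversal_inverses by (simp add: trans_inv_def)

lemma I_set_W: "I_set W mW W_transversal = {(e, x \<cdot> sinv x) | e x. (e, x) \<in> W}"
proof -
  have idem_of: "mW (e, x) (trans_inv W mW W_transversal (e, x)) = (e, x \<cdot> sinv x)"
    if "(e, x) \<in> W" for e x
    using W_trans_inv W_mult_inverse that by (simp del: mW_Pair)
  show ?thesis unfolding I_set_def
  proof (intro set_eqI iffI)
    fix z assume "z \<in> {mW w (trans_inv W mW W_transversal w) | w. w \<in> W}"
    then show "z \<in> {(e, x \<cdot> sinv x) | e x. (e, x) \<in> W}" using idem_of by auto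
  next
    fix z assume "z \<in> {(e, x \<cdot> sinv x) | e x. (e, x) \<in> W}"
    then obtain e x where "(e, x) \<in> W" "z = (e, x \<cdot> sinv x)" by blast
    then show "z \<in> {mW w (trans_inv W mW W_transversal w) | w. w \<in> W}"
      using idem_of[symmetric] by blast
  qed
qed

lemma ex1_idem_L_related:
  assumes e: "e \<in> I"
  shows "\<exists>!f. f \<in> S0 \<and> f \<cdot> f = f \<and> e \<odot> f = e \<and> f \<odot> e = f"
proof -
  have inverse_iff: "f \<in> inverses I mI e \<longleftrightarrow> e \<odot> f = e \<and> f \<odot> e = f"
    if "f \<in> S0" "f \<cdot> f = f" for f
    using e idem_in_I[OF that] I_left_regular[of e f] I_left_regular[of f e]
      I_assoc[of e f e] I_assoc[of f e f]
    by (auto simp: inverses_def simp del: I_assoc)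
  have "\<exists>!f. f \<in> inverses I mI e \<inter> idems S0 mS"
    using semilattice_transversal e by (simp add: semilattice_transversal_def)
  then obtain f where f: "f \<in> inverses I mI e \<inter> idems S0 mS"
    and unique: "\<And>f'. f' \<in> inverses I mI e \<inter> idems S0 mS \<Longrightarrow> f' = f"
    by blast
  show ?thesis
  proof (rule ex1I[of _ f])
    have "f \<in> S0" "f \<cdot> f = f" using f by (simp_all add: idems_def)
    then show "f \<in> S0 \<and> f \<cdot> f = f \<and> e \<odot> f = e \<and> f \<odot> e = f"
      using f inverse_iff by simp
  next
    fix f' assume "f' \<in> S0 \<and> f' \<cdot> f' = f' \<and> e \<odot> f' = e \<and> f' \<odot> e = f'"
    then show "f' = f" using unique inverse_iff by (simp add: idems_def)
  qed
qed

lemma I_set_W_iso: "isomorphic (I_set W mW W_transversal) mW I mI"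
proof -
  have inj: "inj_on fst (I_set W mW W_transversal)"
  proof (rule inj_onI)
    fix a b assume a_in: "a \<in> I_set W mW W_transversal" and b_in: "b \<in> I_set W mW W_transversal"
      and "fst a = fst b"
    obtain e x where a: "(e, x) \<in> W" "a = (e, x \<cdot> sinv x)"
      using a_in unfolding I_set_W by blast
    obtain g y where "(g, y) \<in> W" "b = (g, y \<cdot> sinv y)"
      using b_in unfolding I_set_W by blast
    with \<open>fst a = fst b\<close> a have b: "(e, y) \<in> W" "b = (e, y \<cdot> sinv y)" by simp_all
    have e: "e \<in> I" using a by (simp add: mem_W_iff)
    have "x \<cdot> sinv x \<in> S0 \<and> (x \<cdot> sinv x) \<cdot> (x \<cdot> sinv x) = x \<cdot> sinv x \<and>
        e \<odot> (x \<cdot> sinv x) = e \<and> (x \<cdot> sinv x) \<odot> e = x \<cdot> sinv x"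
      using a range_idem_idem[of x] by (simp add: mem_W_iff del: assoc)
    moreover have "y \<cdot> sinv y \<in> S0 \<and> (y \<cdot> sinv y) \<cdot> (y \<cdot> sinv y) = y \<cdot> sinv y \<and>
        e \<odot> (y \<cdot> sinv y) = e \<and> (y \<cdot> sinv y) \<odot> e = y \<cdot> sinv y"
      using b range_idem_idem[of y] by (simp add: mem_W_iff del: assoc)
    ultimately have "x \<cdot> sinv x = y \<cdot> sinv y"
      using ex1_idem_L_related[OF e] by blast
    then show "a = b" using a b by simp
  qed
  have "fst ` I_set W mW W_transversal = I"
  proof (intro set_eqI iffI)
    fix e assume "e \<in> fst ` I_set W mW W_transversal"
    then show "e \<in> I" by (auto simp: I_set_W mem_W_iff)
  next
    fix e assume e: "e \<in> I"
    then obtain f where f: "f \<in> S0" "f \<cdot> f = f" "e \<odot> f = e" "f \<odot> e = f"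
      using ex1_idem_L_related[OF e] by blast
    then have "(e, f) \<in> W" "(e, f) = (e, f \<cdot> sinv f)" using e sinv_idem by (simp_all add: mem_W_iff)
    then have "(e, f) \<in> I_set W mW W_transversal" unfolding I_set_W by blast
    then show "e \<in> fst ` I_set W mW W_transversal" by (metis fst_conv image_eqI)
  qed
  moreover have "fst (mW a b) = fst a \<odot> fst b"
    if a_in: "a \<in> I_set W mW W_transversal" and b_in: "b \<in> I_set W mW W_transversal" for a b
  proof -
    obtain e x where a: "(e, x) \<in> W" "a = (e, x \<cdot> sinv x)" using a_in unfolding I_set_W by blast
    obtain g y where b: "(g, y) \<in> W" "b = (g, y \<cdot> sinv y)" using b_in unfolding I_set_W by blast
    have x: "x \<in> S0" "e \<in> I" "e \<odot> (x \<cdot> sinv x) = e" "g \<in> I" using a b by (simp_all add: mem_W_iff)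
    have "fst (mW a b) = e \<odot> ((x \<cdot> sinv x) \<odot> g)"
      using act_range_idem_left[of x g] a b x by (simp del: assoc)
    also have "\<dots> = e \<odot> g" using I_assoc[of e "x \<cdot> sinv x" g] x by simp
    finally show ?thesis using a b by simp
  qed
  ultimately show ?thesis using inj unfolding isomorphic_def sg_iso_def bij_betw_def by blast
qed

end

locale left_inverse_transversal =
  fixes T :: "'b set" and mT :: "'b \<Rightarrow> 'b \<Rightarrow> 'b" (infixl "\<cdot>" 70) and T0 :: "'b set"
  assumes left_inverse: "left_inverse_sg T mT"
    and transversal: "inverse_transversal T mT T0"
begin

sublocale inverse_semigroup T0 mT
  using transversal by unfold_locales (simp add: inverse_transversal_def inverse_subsg_def)

lemma transversal_subset [simp]: "x \<in> T0 \<Longrightarrow> x \<in> T"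
  using transversal by (auto simp: inverse_transversal_def inverse_subsg_def)

lemma semigroup_T: "semigroup_on T mT"
  using left_inverse by (simp add: left_inverse_sg_def regular_sg_def)

lemma T_closed [simp]: "x \<in> T \<Longrightarrow> y \<in> T \<Longrightarrow> x \<cdot> y \<in> T"
  using semigroup_T by (simp add: semigroup_on_def)

lemma T_assoc [simp]: "x \<in> T \<Longrightarrow> y \<in> T \<Longrightarrow> z \<in> T \<Longrightarrow> (x \<cdot> y) \<cdot> z = x \<cdot> (y \<cdot> z)"
  using semigroup_T by (simp add: semigroup_on_def)

lemma T_idem_mult_left [simp]: "e \<in> T \<Longrightarrow> e \<cdot> e = e \<Longrightarrow> z \<in> T \<Longrightarrow> e \<cdot> (e \<cdot> z) = e \<cdot> z"
  by (metis T_assoc)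

lemma T_mult_sinv_mult_left [simp]:
  assumes "x \<in> T0" "z \<in> T" shows "x \<cdot> (sinv x \<cdot> (x \<cdot> z)) = x \<cdot> z"
proof -
  have "x \<cdot> (sinv x \<cdot> (x \<cdot> z)) = (x \<cdot> (sinv x \<cdot> x)) \<cdot> z" using assms by (simp del: mult_sinv_mult)
  then show ?thesis using assms by simp
qed

lemma T_sinv_mult_sinv_left [simp]:
  assumes "x \<in> T0" "z \<in> T" shows "sinv x \<cdot> (x \<cdot> (sinv x \<cdot> z)) = sinv x \<cdot> z"
proof -
  have "sinv x \<cdot> (x \<cdot> (sinv x \<cdot> z)) = (sinv x \<cdot> (x \<cdot> sinv x)) \<cdot> z"
    using assms by (simp del: sinv_mult_sinv)
  then show ?thesis using assms by simp
qed

abbreviation tinv :: "'b \<Rightarrow> 'b" where "tinv x \<equiv> trans_inv T mT T0 x"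

lemma tinv_inverses: "x \<in> T \<Longrightarrow> tinv x \<in> inverses T mT x \<inter> T0"
  using transversal unfolding inverse_transversal_def trans_inv_def by (metis theI')

lemma tinv_closed [simp]: "x \<in> T \<Longrightarrow> tinv x \<in> T0"
  using tinv_inverses by blast

lemma mult_tinv_mult [simp]: "x \<in> T \<Longrightarrow> x \<cdot> (tinv x \<cdot> x) = x"
  using tinv_inverses[of x] by (simp add: inverses_def)

lemma tinv_mult_tinv [simp]: "x \<in> T \<Longrightarrow> tinv x \<cdot> (x \<cdot> tinv x) = tinv x"
  using tinv_inverses[of x] by (simp add: inverses_def)

lemma tinv_unique:
  assumes "x \<in> T" "y \<in> T0" "x \<cdot> (y \<cdot> x) = x" "y \<cdot> (x \<cdot> y) = y"
  shows "y = tinv x"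
proof -
  have "y \<in> inverses T mT x \<inter> T0" using assms by (simp add: inverses_def)
  moreover have "\<exists>!y. y \<in> inverses T mT x \<inter> T0"
    using transversal assms(1) by (simp add: inverse_transversal_def)
  ultimately show ?thesis using tinv_inverses[OF assms(1)] by blast
qed

lemma idems_mutual_left_units_eq:
  assumes "e \<in> T" "f \<in> T" "e \<cdot> e = e" "f \<cdot> f = f" "f \<cdot> e = e" "e \<cdot> f = f"
  shows "e = f"
proof -
  have "R_rel T mT e e" using assms by (simp add: R_rel_def)
  moreover have "R_rel T mT e f" using assms unfolding R_rel_def by metis
  moreover have "\<exists>!q. q \<in> idems T mT \<and> R_rel T mT e q"
    using left_inverse assms(1) by (simp add: left_inverse_sg_def)
  ultimately show ?thesis using assms by (auto simp: idems_def)
qed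

lemma mult_T_idems_idem:
  assumes e: "e \<in> T" "e \<cdot> e = e" and f: "f \<in> T" "f \<cdot> f = f"
  shows "(e \<cdot> f) \<cdot> (e \<cdot> f) = e \<cdot> f"
proof -
  define a where "a = tinv (e \<cdot> f)"
  have a: "a \<in> T" using e f by (simp add: a_def)
  have efa: "e \<cdot> (f \<cdot> (a \<cdot> (e \<cdot> f))) = e \<cdot> f"
    using mult_tinv_mult[of "e \<cdot> f"] e f a by (simp add: a_def[symmetric] del: mult_tinv_mult)
  have aef: "a \<cdot> (e \<cdot> (f \<cdot> a)) = a"
    using tinv_mult_tinv[of "e \<cdot> f"] e f a by (simp add: a_def[symmetric] del: tinv_mult_tinv)
  have aefz: "a \<cdot> (e \<cdot> (f \<cdot> (a \<cdot> z))) = a \<cdot> z" if "z \<in> T" for z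
  proof -
    have "(a \<cdot> (e \<cdot> (f \<cdot> a))) \<cdot> z = a \<cdot> z" by (simp only: aef)
    then show ?thesis using a e f that by simp
  qed
  \<comment> \<open>\<open>g = f a e\<close> is an idempotent inverse of \<open>e f\<close>; the idempotent \<open>g e f\<close> is \<open>\<R>\<close>-related to it, hence equal to it.\<close>
  define g where "g = f \<cdot> (a \<cdot> e)"
  have g: "g \<in> T" using a e f by (simp add: g_def)
  have g_idem: "g \<cdot> g = g" and g_ef_g: "g \<cdot> ((e \<cdot> f) \<cdot> g) = g"
    using aefz e f a by (simp_all add: g_def)
  have ef_g_ef: "(e \<cdot> f) \<cdot> (g \<cdot> (e \<cdot> f)) = e \<cdot> f" using efa e f a by (simp add: g_def)
  define h where "h = g \<cdot> (e \<cdot> f)"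
  have h: "h \<in> T" using g e f by (simp add: h_def)
  have hg: "h \<cdot> g = g" using g_ef_g g e f by (simp add: h_def)
  have gh: "g \<cdot> h = h" using g_idem g e f by (simp add: h_def)
  have "h \<cdot> h = (h \<cdot> g) \<cdot> (e \<cdot> f)" using g e f h by (simp add: h_def)
  then have "h \<cdot> h = h" using hg by (simp add: h_def)
  then have "g = h" using idems_mutual_left_units_eq[OF g h g_idem _ hg gh] by simp
  then have "e \<cdot> f = (e \<cdot> f) \<cdot> g" using ef_g_ef by (simp add: h_def)
  moreover have "((e \<cdot> f) \<cdot> g) \<cdot> ((e \<cdot> f) \<cdot> g) = (e \<cdot> f) \<cdot> (g \<cdot> ((e \<cdot> f) \<cdot> g))"
    using g e f by simp
  ultimately show ?thesis using g_ef_g by simp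
qed

lemma idems_left_regular:
  assumes e: "e \<in> T" "e \<cdot> e = e" and f: "f \<in> T" "f \<cdot> f = f"
  shows "e \<cdot> (f \<cdot> e) = e \<cdot> f"
proof -
  have ef: "(e \<cdot> f) \<cdot> (e \<cdot> f) = e \<cdot> f" using mult_T_idems_idem e f .
  have efe: "((e \<cdot> f) \<cdot> e) \<cdot> ((e \<cdot> f) \<cdot> e) = (e \<cdot> f) \<cdot> e"
    using mult_T_idems_idem[of "e \<cdot> f" e] ef e f by simp
  have "((e \<cdot> f) \<cdot> e) \<cdot> (e \<cdot> f) = (e \<cdot> f) \<cdot> (e \<cdot> f)" using e f by simp
  then have efe_ef: "((e \<cdot> f) \<cdot> e) \<cdot> (e \<cdot> f) = e \<cdot> f" using ef by simp
  have "(e \<cdot> f) \<cdot> ((e \<cdot> f) \<cdot> e) = ((e \<cdot> f) \<cdot> (e \<cdot> f)) \<cdot> e" using e f by simp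
  then have ef_efe: "(e \<cdot> f) \<cdot> ((e \<cdot> f) \<cdot> e) = (e \<cdot> f) \<cdot> e" using ef by simp
  have "e \<cdot> f = (e \<cdot> f) \<cdot> e"
    by (rule idems_mutual_left_units_eq) (use e f ef efe efe_ef ef_efe in simp_all)
  then show ?thesis using e f by simp
qed

lemma idems_left_regular_left:
  assumes "e \<in> T" "e \<cdot> e = e" "f \<in> T" "f \<cdot> f = f" "z \<in> T"
  shows "e \<cdot> (f \<cdot> (e \<cdot> z)) = e \<cdot> (f \<cdot> z)"
proof -
  have "(e \<cdot> (f \<cdot> e)) \<cdot> z = (e \<cdot> f) \<cdot> z" using idems_left_regular assms by simp
  then show ?thesis using assms by simp
qed

lemma conj_idem_absorb:
  assumes x: "x \<in> T0" and e: "e \<in> T" "e \<cdot> e = e" and z: "z \<in> T"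
  shows "x \<cdot> (e \<cdot> (sinv x \<cdot> (x \<cdot> z))) = x \<cdot> (e \<cdot> z)"
proof -
  have "x \<cdot> (e \<cdot> (sinv x \<cdot> (x \<cdot> z))) = x \<cdot> (sinv x \<cdot> (x \<cdot> (e \<cdot> (sinv x \<cdot> (x \<cdot> z)))))"
    using x e z by simp
  also have "\<dots> = x \<cdot> (sinv x \<cdot> (x \<cdot> (e \<cdot> z)))"
    using idems_left_regular_left[of "sinv x \<cdot> x" e z] x e z by simp
  also have "\<dots> = x \<cdot> (e \<cdot> z)" using x e z by simp
  finally show ?thesis .
qed

abbreviation E where "E \<equiv> idems T mT"

definition conj :: "'b \<Rightarrow> 'b \<Rightarrow> 'b" where
  "conj x e = (x \<cdot> e) \<cdot> sinv x"

lemma idem_tinv: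
  assumes "e \<in> T" "e \<cdot> e = e"
  shows "e \<cdot> tinv e = e" "tinv e \<cdot> e = tinv e" "tinv e \<cdot> tinv e = tinv e"
proof -
  have "e = e \<cdot> tinv e" by (rule idems_mutual_left_units_eq) (use assms in simp_all)
  then show et: "e \<cdot> tinv e = e" by simp
  then show te: "tinv e \<cdot> e = tinv e" using tinv_mult_tinv[of e] assms by simp
  have "tinv e \<cdot> tinv e = (tinv e \<cdot> e) \<cdot> tinv e" by (simp only: te)
  then show "tinv e \<cdot> tinv e = tinv e" using tinv_mult_tinv[of e] assms by simp
qed

lemma semigroup_E: "semigroup_on E mT"
  using mult_T_idems_idem by (auto simp: semigroup_on_def idems_def)

lemma left_regular_band_E: "left_regular_band E mT"
  using semigroup_E idems_left_regular by (auto simp: left_regular_band_def idems_def)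

lemma semilattice_transversal_E: "semilattice_transversal (idems T0 mT) E mT"
proof -
  have "\<exists>!y. y \<in> inverses E mT x \<inter> idems T0 mT" if x: "x \<in> E" for x
  proof (rule ex1I[of _ "tinv x"])
    have x: "x \<in> T" "x \<cdot> x = x" using x by (simp_all add: idems_def)
    show "tinv x \<in> inverses E mT x \<inter> idems T0 mT"
      using idem_tinv[OF x] x by (simp add: inverses_def idems_def)
    fix y assume "y \<in> inverses E mT x \<inter> idems T0 mT"
    then show "y = tinv x" using tinv_unique[of x y] x by (auto simp: inverses_def idems_def)
  qed
  moreover have "\<forall>e\<in>idems T0 mT. \<forall>f\<in>idems T0 mT. e \<cdot> f \<in> idems T0 mT \<and> e \<cdot> f = f \<cdot> e"
    using mult_idems_idem idems_commute by (simp add: idems_def)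
  ultimately show ?thesis by (auto simp: semilattice_transversal_def idems_def)
qed

lemma construction_data_conj: "construction_data T0 mT E mT conj"
proof -
  have "conj x e \<in> E" if x: "x \<in> T0" and e: "e \<in> T" "e \<cdot> e = e" for x e
    using idems_left_regular_left[of e "sinv x \<cdot> x" "sinv x"] x e
    by (simp add: conj_def idems_def)
  moreover have "conj (x \<cdot> sinv x) e = (x \<cdot> sinv x) \<cdot> e"
    if x: "x \<in> T0" and e: "e \<in> T" "e \<cdot> e = e" for x e
    using sinv_idem[of "x \<cdot> sinv x"] idems_left_regular[of "x \<cdot> sinv x" e] x e
    by (simp add: conj_def)
  ultimately show ?thesis
    using inverse_sg left_regular_band_E semilattice_transversal_E conj_idem_absorb
    by (auto simp: construction_data_def conj_def sinv_mult idems_def)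
qed

abbreviation WT where "WT \<equiv> W_set T0 mT E mT"
abbreviation mWT where "mWT \<equiv> W_mult mT mT conj"

lemma mem_WT_iff:
  "(e, x) \<in> WT \<longleftrightarrow>
     x \<in> T0 \<and> e \<in> T \<and> e \<cdot> e = e \<and> e \<cdot> (x \<cdot> sinv x) = e \<and> (x \<cdot> sinv x) \<cdot> e = x \<cdot> sinv x"
proof -
  have "x \<in> T0 \<Longrightarrow> e \<in> E \<Longrightarrow>
      L_rel E mT e (x \<cdot> sinv x) \<longleftrightarrow> e \<cdot> (x \<cdot> sinv x) = e \<and> (x \<cdot> sinv x) \<cdot> e = x \<cdot> sinv x"
    using L_rel_idems_iff[OF semigroup_E, of e "x \<cdot> sinv x"] by (simp add: idems_def)
  then show ?thesis by (auto simp: W_set_def L_class_def idems_def)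
qed

lemma WT_tinv: assumes "(e, x) \<in> WT" shows "tinv (e \<cdot> x) = sinv x"
proof -
  have x: "x \<in> T0" "e \<in> T" "e \<cdot> e = e" "e \<cdot> (x \<cdot> sinv x) = e" "(x \<cdot> sinv x) \<cdot> e = x \<cdot> sinv x"
    using assms by (simp_all add: mem_WT_iff)
  have "x \<cdot> (sinv x \<cdot> (e \<cdot> x)) = x"
  proof -
    have "((x \<cdot> sinv x) \<cdot> e) \<cdot> x = (x \<cdot> sinv x) \<cdot> x" by (simp only: x(5))
    then show ?thesis using x(1,2) by simp
  qed
  then have "(e \<cdot> x) \<cdot> (sinv x \<cdot> (e \<cdot> x)) = e \<cdot> x" using x by simp
  moreover have "sinv x \<cdot> ((e \<cdot> x) \<cdot> sinv x) = sinv x"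
  proof -
    have "((x \<cdot> sinv x) \<cdot> e) \<cdot> (x \<cdot> sinv x) = (x \<cdot> sinv x) \<cdot> (x \<cdot> sinv x)" by (simp only: x(5))
    then have "sinv x \<cdot> (x \<cdot> (sinv x \<cdot> (e \<cdot> (x \<cdot> sinv x)))) = sinv x" using x(1,2) by simp
    then show ?thesis using x(1,2) by simp
  qed
  ultimately show ?thesis using tinv_unique[of "e \<cdot> x" "sinv x"] x by simp
qed

lemma WT_iso: "isomorphic WT mWT T mT"
proof -
  let ?phi = "\<lambda>p. fst p \<cdot> snd p"
  have "inj_on ?phi WT"
  proof (rule inj_onI)
    fix a b assume a: "a \<in> WT" and b: "b \<in> WT" and ab: "?phi a = ?phi b"
    obtain e x g y where ex: "a = (e, x)" and gy: "b = (g, y)" by (cases a, cases b)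
    have A: "x \<in> T0" "e \<in> T" "e \<cdot> (x \<cdot> sinv x) = e" using a ex by (simp_all add: mem_WT_iff)
    have B: "y \<in> T0" "g \<in> T" "g \<cdot> (y \<cdot> sinv y) = g" using b gy by (simp_all add: mem_WT_iff)
    have "sinv x = sinv y" using WT_tinv a b ab ex gy by (metis fst_conv snd_conv)
    then have xy: "x = y" using A B by (metis sinv_sinv)
    have "e = (e \<cdot> x) \<cdot> sinv x" using A by simp
    also have "\<dots> = (g \<cdot> y) \<cdot> sinv y" using ab ex gy xy by simp
    also have "\<dots> = g" using B by simp
    finally show "a = b" using ex gy xy by simp
  qed
  moreover have "?phi ` WT = T"
  proof (intro set_eqI iffI)
    fix t assume "t \<in> ?phi ` WT"
    then show "t \<in> T" by (auto simp: mem_WT_iff)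
  next
    fix t assume t: "t \<in> T"
    define u where "u = tinv t"
    have u: "u \<in> T0" "u \<cdot> (t \<cdot> u) = u" "t \<cdot> (u \<cdot> t) = t" using t by (simp_all add: u_def)
    have utz: "u \<cdot> (t \<cdot> (u \<cdot> z)) = u \<cdot> z" if "z \<in> T" for z
    proof -
      have "(u \<cdot> (t \<cdot> u)) \<cdot> z = u \<cdot> z" by (simp only: u(2))
      then show ?thesis using u(1) t that by simp
    qed
    define x where "x = sinv u"
    have x: "x \<in> T0" "sinv x = u" using u by (simp_all add: x_def)
    have "(t \<cdot> u, x) \<in> WT" using x u t utz[of x] by (simp add: mem_WT_iff x_def)
    moreover have "u \<cdot> t = u \<cdot> x"
    proof (rule idems_mutual_left_units_eq)
      show "(u \<cdot> x) \<cdot> (u \<cdot> t) = u \<cdot> t" using u t by (simp add: x_def)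
      show "(u \<cdot> t) \<cdot> (u \<cdot> x) = u \<cdot> x" using u t utz[of x] by (simp add: x_def)
    qed (use u t x_def in simp_all)
    then have "t = (t \<cdot> u) \<cdot> x" using u t x by (metis T_assoc transversal_subset)
    ultimately show "t \<in> ?phi ` WT" by force
  qed
  moreover have "?phi (mWT a b) = ?phi a \<cdot> ?phi b" if a: "a \<in> WT" and b: "b \<in> WT" for a b
  proof -
    obtain e x g y where ex: "a = (e, x)" and gy: "b = (g, y)" by (cases a, cases b)
    have "x \<in> T0" "e \<in> T" "y \<in> T0" "g \<in> T" "g \<cdot> g = g"
      using a b ex gy by (simp_all add: mem_WT_iff)
    then show ?thesis using conj_idem_absorb[of x g y] ex gy by (simp add: W_mult_def conj_def)
  qed
  ultimately show ?thesis unfolding isomorphic_def sg_iso_def bij_betw_def by blast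
qed

end

theorem corollary4p3:
  fixes S0 I :: "'a set" and mS mI act :: "'a \<Rightarrow> 'a \<Rightarrow> 'a"
  shows "(construction_data S0 mS I mI act \<longrightarrow>
            left_inverse_sg (W_set S0 mS I mI) (W_mult mS mI act) \<and>
            (\<exists>T0. inverse_transversal (W_set S0 mS I mI) (W_mult mS mI act) T0 \<and>
                  isomorphic T0 (W_mult mS mI act) S0 mS \<and>
                  isomorphic (I_set (W_set S0 mS I mI) (W_mult mS mI act) T0)
                             (W_mult mS mI act) I mI)) \<and>
         (\<forall>(T :: 'b set) (mT :: 'b \<Rightarrow> 'b \<Rightarrow> 'b) T0.
            left_inverse_sg T mT \<and> inverse_transversal T mT T0 \<longrightarrow>
            (\<exists>(S0' :: 'b set) mS' I' mI' act'.
               construction_data S0' mS' I' mI' act' \<and>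
               isomorphic (W_set S0' mS' I' mI') (W_mult mS' mI' act') T mT))"
proof (intro conjI impI allI)
  assume "construction_data S0 mS I mI act"
  then interpret construction S0 mS I mI act by unfold_locales
  show "left_inverse_sg W mW" by (rule W_left_inverse)
  show "\<exists>T0. inverse_transversal W mW T0 \<and> isomorphic T0 mW S0 mS \<and> isomorphic (I_set W mW T0) mW I mI"
    using W_inverse_transversal W_transversal_iso I_set_W_iso by blast
next
  fix T :: "'b set" and mT T0
  assume "left_inverse_sg T mT \<and> inverse_transversal T mT T0"
  then interpret left_inverse_transversal T mT T0 by unfold_locales auto
  show "\<exists>(S0' :: 'b set) mS' I' mI' act'.
          construction_data S0' mS' I' mI' act' \<and>
          isomorphic (W_set S0' mS' I' mI') (W_mult mS' mI' act') T mT"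
    using construction_data_conj WT_iso by blast
qed

end
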